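(* Let $\Omega\subset\mathbb{R}^2$ be open, $\lambda>0$, and let $u\in L^2(\Omega)$ satisfy $-\Delta u=\lambda u$ in $\Omega$. Let $\mathbf{x}_0\in\Omega$, $h>0$, $\alpha\in(0,1)$, and let $\mathbf{e}^-,\mathbf{e}^+$ be unit vectors with angle $\alpha\pi$ from $\mathbf{e}^-$ to $\mathbf{e}^+$; put $\Gamma^\pm=\{\mathbf{x}_0+t\mathbf{e}^\pm:0\le t\le h\}\subset\Omega$. Suppose $\partial_\nu u+\eta_2u=0$ on $\Gamma^+$, where $\eta_2\in C^1(\Gamma^+)$ is complex-valued and $\nu$ is a unit normal to $\Gamma^+$, and $u=0$ on $\Gamma^-$. If $\alpha\notin\{\frac14,\frac12,\frac34\}$, then $u$ vanishes up to the order $3$ at $\mathbf{x}_0$, i.e. $u$ and all its partial derivatives of order $1$ and $2$ vanish at $\mathbf{x}_0$.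
   Context: No boundary condition is imposed on $\partial\Omega$; $u$ is real-analytic in $\Omega$. *)

theory Defs
  imports "HOL-Analysis.Analysis"
begin

definition Dx :: "(real \<times> real \<Rightarrow> complex) \<Rightarrow> real \<times> real \<Rightarrow> complex" where
  "Dx f p = vector_derivative (\<lambda>t. f (t, snd p)) (at (fst p))"

definition Dy :: "(real \<times> real \<Rightarrow> complex) \<Rightarrow> real \<times> real \<Rightarrow> complex" where
  "Dy f p = vector_derivative (\<lambda>t. f (fst p, t)) (at (snd p))"

text \<open>Iterated partial derivative: True means d/dx, False means d/dy
  (the head of the list is applied last).\<close>
fun pd :: "bool list \<Rightarrow> (real \<times> real \<Rightarrow> complex) \<Rightarrow> real \<times> real \<Rightarrow> complex" where
  "pd [] f = f"
| "pd (b # ds) f = (if b then Dx (pd ds f) else Dy (pd ds f))"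

definition smooth_on :: "(real \<times> real) set \<Rightarrow> (real \<times> real \<Rightarrow> complex) \<Rightarrow> bool" where
  "smooth_on S f \<longleftrightarrow> (\<forall>ds. continuous_on S (pd ds f) \<and>
     (\<forall>p\<in>S. (\<lambda>t. pd ds f (t, snd p)) differentiable (at (fst p)) \<and>
             (\<lambda>t. pd ds f (fst p, t)) differentiable (at (snd p))))"

definition laplacian :: "(real \<times> real \<Rightarrow> complex) \<Rightarrow> real \<times> real \<Rightarrow> complex" where
  "laplacian f p = Dx (Dx f) p + Dy (Dy f) p"

definition rot :: "real \<Rightarrow> real \<times> real \<Rightarrow> real \<times> real" where
  "rot \<theta> v = (cos \<theta> * fst v - sin \<theta> * snd v, sin \<theta> * fst v + cos \<theta> * snd v)"

definition seg :: "real \<times> real \<Rightarrow> real \<times> real \<Rightarrow> real \<Rightarrow> (real \<times> real) set" where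
  "seg x0 e h = {x0 + t *\<^sub>R e | t. 0 \<le> t \<and> t \<le> h}"

definition normal_deriv :: "real \<times> real \<Rightarrow> (real \<times> real \<Rightarrow> complex) \<Rightarrow> real \<times> real \<Rightarrow> complex" where
  "normal_deriv \<nu> f p = of_real (fst \<nu>) * Dx f p + of_real (snd \<nu>) * Dy f p"

end

(* The function u vanishes on the segment \<Gamma>- through x0, so all its derivatives along e- vanish
   there, and the Robin condition on \<Gamma>+ adds one linear condition at x0 at each order.
   At order 1 the conditions on the derivatives along e- and \<nu> determine the gradient, since the
   cross product of e- and \<nu> is +-cos(\<alpha> pi).  At order 2 the Hessian is symmetric (Schwarz) and
   traceless (Helmholtz equation with u x0 = 0), so it has two unknowns; the second derivative along
   e- and the derivative along e+ of the normal derivative give a 2x2 system with determinant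
   +-cos(2 \<alpha> pi). *)

theory Submission
  imports Defs
begin

lemma pd_append: "pd ds (pd es f) = pd (ds @ es) f"
  by (induction ds) auto

lemma smooth_on_pd:
  assumes "smooth_on S f"
  shows "smooth_on S (pd ds f)"
  using assms unfolding smooth_on_def by (simp add: pd_append)

lemma smooth_on_Dx: "smooth_on S f \<Longrightarrow> smooth_on S (Dx f)"
  using smooth_on_pd[of S f "[True]"] by simp

lemma smooth_on_Dy: "smooth_on S f \<Longrightarrow> smooth_on S (Dy f)"
  using smooth_on_pd[of S f "[False]"] by simp

lemma smooth_on_continuous_on: "smooth_on S f \<Longrightarrow> continuous_on S f"
  unfolding smooth_on_def using pd.simps(1) by metis

lemma smooth_on_has_vector_derivative_x:
  assumes "smooth_on S f" "(x, y) \<in> S"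
  shows "((\<lambda>t. f (t, y)) has_vector_derivative Dx f (x, y)) (at x)"
proof -
  have "(\<lambda>t. f (t, y)) differentiable (at x)"
    using assms unfolding smooth_on_def by (metis fst_conv snd_conv pd.simps(1))
  then show ?thesis unfolding Dx_def by (simp add: vector_derivative_works)
qed

lemma smooth_on_has_vector_derivative_y:
  assumes "smooth_on S f" "(x, y) \<in> S"
  shows "((\<lambda>t. f (x, t)) has_vector_derivative Dy f (x, y)) (at y)"
proof -
  have "(\<lambda>t. f (x, t)) differentiable (at y)"
    using assms unfolding smooth_on_def by (metis fst_conv snd_conv pd.simps(1))
  then show ?thesis unfolding Dy_def by (simp add: vector_derivative_works)
qed

lemma has_derivative_of_partials:
  fixes F :: "real \<times> real \<Rightarrow> complex"
  assumes "open S" "p \<in> S"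
    and dx: "\<And>q. q \<in> S \<Longrightarrow> (\<lambda>t. F (t, snd q)) differentiable (at (fst q))"
    and dy: "\<And>q. q \<in> S \<Longrightarrow> (\<lambda>t. F (fst q, t)) differentiable (at (snd q))"
    and cont_Dy: "continuous_on S (Dy F)"
  shows "(F has_derivative (\<lambda>v. fst v *\<^sub>R Dx F p + snd v *\<^sub>R Dy F p)) (at p)"
proof -
  obtain x y where p: "p = (x, y)" by (cases p)
  obtain A B where AB: "open A" "open B" "p \<in> A \<times> B" "A \<times> B \<subseteq> S"
    by (rule open_prod_elim[OF assms(1,2)])
  obtain e where e: "e > 0" "ball y e \<subseteq> B"
    using open_contains_ball_eq[OF AB(2)] AB(3) p by auto
  have "((\<lambda>(a, b). F (a, b)) has_derivative
          (\<lambda>(tx, ty). tx *\<^sub>R Dx F (x, y) + blinfun_apply (blinfun_scaleR_left (Dy F (x, y))) ty))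
        (at (x, y) within A \<times> ball y e)"
  proof (rule has_derivative_partialsI[where fy = "\<lambda>a b. blinfun_scaleR_left (Dy F (a, b))"])
    show "((\<lambda>a. F (a, y)) has_derivative (\<lambda>t. t *\<^sub>R Dx F (x, y))) (at x within A)"
      using dx[OF assms(2)] p unfolding Dx_def
      by (simp add: vector_derivative_works has_vector_derivative_def has_derivative_at_withinI)
    fix a b assume "a \<in> A" "b \<in> ball y e"
    then have "(a, b) \<in> S" using AB e by auto
    then show "((\<lambda>t. F (a, t)) has_derivative blinfun_apply (blinfun_scaleR_left (Dy F (a, b))))
        (at b within ball y e)"
      using dy[of "(a, b)"] unfolding Dy_def
      by (simp add: vector_derivative_works has_vector_derivative_def has_derivative_at_withinI)
  next
    have "continuous (at (x, y)) (\<lambda>q. blinfun_scaleR_left (Dy F q))"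
      using continuous_on_eq_continuous_at[OF assms(1)] cont_Dy assms(2) p
      by (auto intro: continuous_intros)
    then show "continuous (at (x, y) within A \<times> ball y e) (\<lambda>(a, b). blinfun_scaleR_left (Dy F (a, b)))"
      by (simp add: case_prod_beta' continuous_at_imp_continuous_within)
  qed (use e in auto)
  moreover have "at (x, y) within A \<times> ball y e = at p"
    using at_within_open[of p "A \<times> ball y e"] AB e p by (auto simp: open_Times)
  ultimately show ?thesis by (simp add: p case_prod_beta')
qed

lemma smooth_on_has_derivative:
  assumes "open S" "smooth_on S f" "p \<in> S"
  shows "(f has_derivative (\<lambda>v. fst v *\<^sub>R Dx f p + snd v *\<^sub>R Dy f p)) (at p)"
proof (rule has_derivative_of_partials[OF assms(1,3)])
  fix q assume "q \<in> S"
  then show "(\<lambda>t. f (t, snd q)) differentiable (at (fst q))"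
    and "(\<lambda>t. f (fst q, t)) differentiable (at (snd q))"
    using smooth_on_has_vector_derivative_x[OF assms(2), of "fst q" "snd q"]
      smooth_on_has_vector_derivative_y[OF assms(2), of "fst q" "snd q"]
    by (auto simp: differentiable_def has_vector_derivative_def)
qed (rule smooth_on_continuous_on[OF smooth_on_Dy[OF assms(2)]])

lemma smooth_on_has_vector_derivative_along_line:
  assumes "open S" "smooth_on S f" "p + t *\<^sub>R w \<in> S"
  shows "((\<lambda>s. f (p + s *\<^sub>R w)) has_vector_derivative normal_deriv w f (p + t *\<^sub>R w)) (at t)"
proof -
  have "((\<lambda>s. p + s *\<^sub>R w) has_derivative (\<lambda>s. s *\<^sub>R w)) (at t)"
    by (auto intro!: derivative_eq_intros)
  from diff_chain_at[OF this smooth_on_has_derivative[OF assms]] show ?thesis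
    unfolding has_vector_derivative_def o_def normal_deriv_def
    by (simp add: scaleR_conv_of_real algebra_simps)
qed

lemma has_vector_derivative_eq_on_interval:
  fixes g k :: "real \<Rightarrow> 'a::real_normed_vector"
  assumes "a < b" "t \<in> {a..b}"
    and "(g has_vector_derivative D) (at t within {a..b})"
    and "(k has_vector_derivative D') (at t within {a..b})"
    and "\<And>s. s \<in> {a..b} \<Longrightarrow> g s = k s"
  shows "D = D'"
proof -
  have "(g has_vector_derivative D') (at t within {a..b})"
    using has_vector_derivative_transform[OF assms(2) _ assms(4)] assms(5) by metis
  then show ?thesis
    using vector_derivative_unique_within_closed_interval[of a b t g D D'] assms(1-3) by simp
qed

lemma smooth_on_Dx_difference_eq_integral:
  fixes F :: "real \<times> real \<Rightarrow> complex"
  assumes "smooth_on S F" and rect: "{x - r .. x + r} \<times> {c..d} \<subseteq> S" and "r > 0" and "y \<in> {c..d}"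
  shows "Dx F (x, y) - Dx F (x, c) = integral {c..y} (\<lambda>t. Dx (Dy F) (x, t))"
proof -
  define U where "U = {x - r .. x + r}"
  have sub: "U \<times> {c..y} \<subseteq> S" using rect assms(4) by (auto simp: U_def)
  have xU: "x \<in> U" using \<open>r > 0\<close> by (simp add: U_def)
  have "((\<lambda>x'. integral (cbox c y) (\<lambda>t. Dy F (x', t))) has_vector_derivative
          integral (cbox c y) (\<lambda>t. Dx (Dy F) (x, t))) (at x within U)"
  proof (rule leibniz_rule_vector_derivative)
    fix x' t assume "x' \<in> U" "t \<in> cbox c y"
    then have "(x', t) \<in> S" using sub by auto
    then show "((\<lambda>x'. Dy F (x', t)) has_vector_derivative Dx (Dy F) (x', t)) (at x' within U)"
      by (rule has_vector_derivative_at_within[OF smooth_on_has_vector_derivative_x[OF smooth_on_Dy[OF assms(1)]]])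
  next
    fix x' assume "x' \<in> U"
    then have "continuous_on {c..y} (\<lambda>t. Dy F (x', t))"
      using sub by (intro continuous_on_compose2[OF smooth_on_continuous_on[OF smooth_on_Dy[OF assms(1)]]]
          continuous_intros) auto
    then show "(\<lambda>t. Dy F (x', t)) integrable_on cbox c y"
      by (simp add: integrable_continuous_real)
  next
    show "continuous_on (U \<times> cbox c y) (\<lambda>(x, t). Dx (Dy F) (x, t))"
      using continuous_on_subset[OF smooth_on_continuous_on[OF smooth_on_Dx[OF smooth_on_Dy[OF assms(1)]]] sub]
      by (simp add: case_prod_beta')
  qed (use xU in \<open>auto simp: U_def\<close>)
  then have integral_deriv: "((\<lambda>x'. integral {c..y} (\<lambda>t. Dy F (x', t))) has_vector_derivative
               integral {c..y} (\<lambda>t. Dx (Dy F) (x, t))) (at x within U)"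
    by (simp only: cbox_interval)
  have diff_deriv: "((\<lambda>x'. F (x', y) - F (x', c)) has_vector_derivative Dx F (x, y) - Dx F (x, c))
      (at x within U)"
    using xU sub assms(4)
    by (intro has_vector_derivative_at_within[OF has_vector_derivative_diff]
        smooth_on_has_vector_derivative_x[OF assms(1)]) auto
  show ?thesis
  proof (rule has_vector_derivative_eq_on_interval[OF _ _ diff_deriv[unfolded U_def] integral_deriv[unfolded U_def]])
    fix x' assume "x' \<in> {x - r..x + r}"
    then show "F (x', y) - F (x', c) = integral {c..y} (\<lambda>t. Dy F (x', t))"
      using assms(4) sub
      by (intro integral_unique[symmetric] fundamental_theorem_of_calculus
          has_vector_derivative_at_within[OF smooth_on_has_vector_derivative_y[OF assms(1)]])
         (auto simp: U_def)
  qed (use \<open>r > 0\<close> in auto)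
qed

lemma smooth_on_Dx_Dy_commute:
  assumes "open S" "smooth_on S F" "p \<in> S"
  shows "Dx (Dy F) p = Dy (Dx F) p"
proof -
  obtain x y where p: "p = (x, y)" by (cases p)
  obtain A B where AB: "open A" "open B" "p \<in> A \<times> B" "A \<times> B \<subseteq> S"
    by (rule open_prod_elim[OF assms(1,3)])
  obtain r1 where r1: "r1 > 0" "cball x r1 \<subseteq> A"
    using open_contains_cball_eq[OF AB(1)] AB(3) p by auto
  obtain r2 where r2: "r2 > 0" "cball y r2 \<subseteq> B"
    using open_contains_cball_eq[OF AB(2)] AB(3) p by auto
  define r where "r = min r1 r2"
  define V where "V = {y - r .. y + r}"
  have r: "r > 0" using r1 r2 by (simp add: r_def)
  have rect: "{x - r .. x + r} \<times> V \<subseteq> S"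
  proof -
    have "{x - r .. x + r} \<subseteq> cball x r1" "V \<subseteq> cball y r2"
      by (auto simp: r_def V_def cball_eq_atLeastAtMost)
    then show ?thesis using r1 r2 AB by blast
  qed
  have yV: "y \<in> V" using r by (simp add: V_def)
  have integral_deriv: "((\<lambda>y'. integral {y - r..y'} (\<lambda>t. Dx (Dy F) (x, t))) has_vector_derivative
      Dx (Dy F) (x, y)) (at y within V)"
  proof -
    have "(\<lambda>t. (x, t)) ` V \<subseteq> S" using rect r by auto
    then have "continuous_on V (\<lambda>t. Dx (Dy F) (x, t))"
      by (intro continuous_on_compose2[OF smooth_on_continuous_on[OF smooth_on_Dx[OF smooth_on_Dy[OF assms(2)]]]]
          continuous_intros) auto
    then show ?thesis
      using integral_has_vector_derivative[of "y - r" "y + r" "\<lambda>t. Dx (Dy F) (x, t)" y] yV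
      by (simp add: V_def)
  qed
  have "((\<lambda>y'. Dx F (x, y') - Dx F (x, y - r)) has_vector_derivative Dy (Dx F) (x, y) - 0) (at y)"
    using smooth_on_has_vector_derivative_y[OF smooth_on_Dx[OF assms(2)], of x y] assms(3) p
    by (intro has_vector_derivative_diff has_vector_derivative_const) simp
  then have diff_deriv: "((\<lambda>y'. Dx F (x, y') - Dx F (x, y - r)) has_vector_derivative Dy (Dx F) (x, y))
      (at y within V)"
    by (simp add: has_vector_derivative_at_within)
  have "Dy (Dx F) (x, y) = Dx (Dy F) (x, y)"
    by (rule has_vector_derivative_eq_on_interval[OF _ _ diff_deriv[unfolded V_def] integral_deriv[unfolded V_def]])
       (use r smooth_on_Dx_difference_eq_integral[OF assms(2) rect[unfolded V_def] r] in auto)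
  then show ?thesis using p by simp
qed

text \<open>\<open>normal_deriv\<close> is used for arbitrary directions; \<open>hessian_form v w f p\<close> is the
  derivative in direction \<open>w\<close> of the derivative in direction \<open>v\<close>, i.e. \<open>D\<^sup>2f(p)[v, w]\<close>.\<close>

definition hessian_form :: "real \<times> real \<Rightarrow> real \<times> real \<Rightarrow> (real \<times> real \<Rightarrow> complex) \<Rightarrow> real \<times> real \<Rightarrow> complex" where
  "hessian_form v w f p = of_real (fst v) * normal_deriv w (Dx f) p + of_real (snd v) * normal_deriv w (Dy f) p"

lemma smooth_on_has_vector_derivative_normal_deriv_along_line:
  assumes "open S" "smooth_on S f" "p + t *\<^sub>R w \<in> S"
  shows "((\<lambda>s. normal_deriv v f (p + s *\<^sub>R w)) has_vector_derivative hessian_form v w f (p + t *\<^sub>R w)) (at t)"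
proof -
  have "((\<lambda>s. Dx f (p + s *\<^sub>R w)) has_vector_derivative normal_deriv w (Dx f) (p + t *\<^sub>R w)) (at t)"
    and "((\<lambda>s. Dy f (p + s *\<^sub>R w)) has_vector_derivative normal_deriv w (Dy f) (p + t *\<^sub>R w)) (at t)"
    using smooth_on_has_vector_derivative_along_line[OF assms(1) _ assms(3)] smooth_on_Dx smooth_on_Dy assms(2)
    by blast+
  then show ?thesis
    unfolding normal_deriv_def[of v] hessian_form_def
    by (intro has_vector_derivative_add has_vector_derivative_mult_right)
qed

lemma hessian_form_traceless:
  assumes "Dx (Dy f) p = Dy (Dx f) p" "Dx (Dx f) p + Dy (Dy f) p = 0"
  shows "hessian_form v w f p =
    of_real (fst v * fst w - snd v * snd w) * Dx (Dx f) p + of_real (fst v * snd w + snd v * fst w) * Dx (Dy f) p"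
proof -
  have "Dy (Dy f) p = - Dx (Dx f) p" using assms(2) by (simp add: eq_neg_iff_add_eq_0 add.commute)
  then show ?thesis using assms(1) unfolding hessian_form_def normal_deriv_def by (simp add: algebra_simps)
qed

lemma seg_memI: "t \<in> {0..h} \<Longrightarrow> x0 + t *\<^sub>R e \<in> seg x0 e h"
  by (auto simp: seg_def)

lemma smooth_on_normal_deriv_eq_0_on_seg:
  assumes "open S" "smooth_on S f" "h > 0" "seg x0 e h \<subseteq> S"
    and "\<And>p. p \<in> seg x0 e h \<Longrightarrow> f p = 0" and "p \<in> seg x0 e h"
  shows "normal_deriv e f p = 0"
proof -
  obtain t where t: "t \<in> {0..h}" "p = x0 + t *\<^sub>R e" using assms(6) by (auto simp: seg_def)
  have "((\<lambda>s. f (x0 + s *\<^sub>R e)) has_vector_derivative normal_deriv e f p) (at t within {0..h})"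
  proof -
    have "x0 + t *\<^sub>R e \<in> S" using assms(4,6) t(2) by auto
    from smooth_on_has_vector_derivative_along_line[OF assms(1,2) this] show ?thesis
      using t(2) by (simp add: has_vector_derivative_at_within)
  qed
  moreover have "f (x0 + s *\<^sub>R e) = 0" if "s \<in> {0..h}" for s
    using assms(5) seg_memI that by blast
  ultimately show ?thesis
    using has_vector_derivative_eq_on_interval[OF assms(3) t(1) _ has_vector_derivative_const] by blast
qed

lemma smooth_on_hessian_form_eq_0_on_seg:
  assumes "open S" "smooth_on S f" "h > 0" "seg x0 e h \<subseteq> S"
    and "\<And>p. p \<in> seg x0 e h \<Longrightarrow> f p = 0"
  shows "hessian_form e e f x0 = 0"
proof -
  have h0: "0 \<in> {0..h}" using assms(3) by simp
  have "((\<lambda>s. normal_deriv e f (x0 + s *\<^sub>R e)) has_vector_derivative hessian_form e e f x0) (at 0 within {0..h})"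
    using smooth_on_has_vector_derivative_normal_deriv_along_line[OF assms(1,2), of x0 0 e e] assms(4) seg_memI[OF h0, of x0 e]
    by (auto simp: has_vector_derivative_at_within)
  moreover have "normal_deriv e f (x0 + s *\<^sub>R e) = 0" if "s \<in> {0..h}" for s
    using smooth_on_normal_deriv_eq_0_on_seg[OF assms seg_memI[OF that]] .
  ultimately show ?thesis
    using has_vector_derivative_eq_on_interval[OF assms(3) h0 _ has_vector_derivative_const] by blast
qed

lemma smooth_on_hessian_form_eq_0_of_Robin:
  assumes "open S" "smooth_on S u" "h > 0" "seg x0 e h \<subseteq> S"
    and "(\<lambda>t. \<eta> (x0 + t *\<^sub>R e)) differentiable (at 0)"
    and "\<And>p. p \<in> seg x0 e h \<Longrightarrow> normal_deriv \<nu> u p + \<eta> p * u p = 0"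
    and "u x0 = 0" "Dx u x0 = 0" "Dy u x0 = 0"
  shows "hessian_form \<nu> e u x0 = 0"
proof -
  have h0: "0 \<in> {0..h}" using assms(3) by simp
  have x0: "x0 \<in> S" using assms(4) seg_memI[OF h0, of x0 e] by auto
  obtain E where E: "((\<lambda>t. \<eta> (x0 + t *\<^sub>R e)) has_vector_derivative E) (at 0)"
    using assms(5) vector_derivative_works by blast
  have "((\<lambda>s. u (x0 + s *\<^sub>R e)) has_vector_derivative 0) (at 0)"
    using smooth_on_has_vector_derivative_along_line[OF assms(1,2), of x0 0 e] x0 assms(8,9)
    by (simp add: normal_deriv_def)
  from has_vector_derivative_minus[OF has_vector_derivative_mult[OF E this]]
  have rhs: "((\<lambda>s. - (\<eta> (x0 + s *\<^sub>R e) * u (x0 + s *\<^sub>R e))) has_vector_derivative 0) (at 0 within {0..h})"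
    using assms(7) by (simp add: has_vector_derivative_at_within)
  have lhs: "((\<lambda>s. normal_deriv \<nu> u (x0 + s *\<^sub>R e)) has_vector_derivative hessian_form \<nu> e u x0)
      (at 0 within {0..h})"
    using smooth_on_has_vector_derivative_normal_deriv_along_line[OF assms(1,2), of x0 0 e \<nu>] x0
    by (simp add: has_vector_derivative_at_within)
  show ?thesis
  proof (rule has_vector_derivative_eq_on_interval[OF assms(3) h0 lhs rhs])
    fix s assume "s \<in> {0..h}"
    from assms(6)[OF seg_memI[OF this]]
    show "normal_deriv \<nu> u (x0 + s *\<^sub>R e) = - (\<eta> (x0 + s *\<^sub>R e) * u (x0 + s *\<^sub>R e))"
      by (simp add: eq_neg_iff_add_eq_0)
  qed
qed

lemma real_linear_system_eq_0:
  fixes x y :: "'a::real_field"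
  assumes "of_real p * x + of_real q * y = 0" "of_real r * x + of_real s * y = 0" "p * s - q * r \<noteq> 0"
  shows "x = 0" "y = 0"
proof -
  have "of_real (p * s - q * r) * x = of_real s * (of_real p * x + of_real q * y) - of_real q * (of_real r * x + of_real s * y)"
    by (simp add: algebra_simps)
  then have "of_real (p * s - q * r) * x = 0" using assms(1,2) by (simp only: mult_zero_right diff_self)
  then show "x = 0" using assms(3) by (simp only: mult_eq_0_iff of_real_eq_0_iff) simp
  have "of_real (p * s - q * r) * y = of_real p * (of_real r * x + of_real s * y) - of_real r * (of_real p * x + of_real q * y)"
    by (simp add: algebra_simps)
  then have "of_real (p * s - q * r) * y = 0" using assms(1,2) by (simp only: mult_zero_right diff_self)
  then show "y = 0" using assms(3) by (simp only: mult_eq_0_iff of_real_eq_0_iff) simp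
qed

lemma cos_mult_pi_eq_0_iff: "cos (x * pi) = 0 \<longleftrightarrow> (\<exists>n::int. x = of_int n + 1/2)"
proof -
  have "x * pi = of_int n * pi + pi / 2 \<longleftrightarrow> x * pi = (of_int n + 1/2) * pi" for n :: int
    by (simp add: algebra_simps)
  then have "x * pi = of_int n * pi + pi / 2 \<longleftrightarrow> x = of_int n + 1/2" for n :: int
    using pi_neq_zero by simp
  then show ?thesis by (simp add: cos_zero_iff_int2)
qed

lemma unit_Pair: "norm (v :: real \<times> real) = 1 \<Longrightarrow> fst v ^ 2 + snd v ^ 2 = 1"
  by (cases v) (simp add: norm_Pair)

lemma unit_orthogonal_plane:
  fixes e \<nu> :: "real \<times> real"
  assumes "norm e = 1" "norm \<nu> = 1" "\<nu> \<bullet> e = 0"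
  obtains k where "k ^ 2 = 1" "\<nu> = (- k * snd e, k * fst e)"
proof -
  obtain a b n1 n2 where ab: "e = (a, b)" and n: "\<nu> = (n1, n2)" by (cases e, cases \<nu>)
  have ab1: "a^2 + b^2 = 1" and n_unit: "n1^2 + n2^2 = 1" and ort: "n1 * a + n2 * b = 0"
    using unit_Pair[OF assms(1)] unit_Pair[OF assms(2)] assms(3) by (simp_all add: ab n inner_Pair)
  define k where "k = a * n2 - b * n1"
  have "k^2 = (a^2 + b^2) * (n1^2 + n2^2) - (n1 * a + n2 * b)^2" unfolding k_def by algebra
  then have "k^2 = 1" using ab1 n_unit ort by simp
  moreover have "n1 = - k * b"
    using ab1 ort unfolding k_def by algebra
  moreover have "n2 = k * a"
    using ab1 ort unfolding k_def by algebra
  ultimately show thesis using that ab n by simp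
qed

text \<open>The determinants of the linear systems solved in the two corner lemmas below.\<close>

lemma rot_corner_determinants:
  fixes em \<nu> :: "real \<times> real"
  assumes "norm em = 1" "norm \<nu> = 1" "\<nu> \<bullet> rot \<theta> em = 0"
  shows "\<bar>fst em * snd \<nu> - snd em * fst \<nu>\<bar> = \<bar>cos \<theta>\<bar>"
    and "\<bar>(fst em * fst em - snd em * snd em) * (fst \<nu> * snd (rot \<theta> em) + snd \<nu> * fst (rot \<theta> em))
          - (fst em * snd em + snd em * fst em) * (fst \<nu> * fst (rot \<theta> em) - snd \<nu> * snd (rot \<theta> em))\<bar>
         = \<bar>cos (2 * \<theta>)\<bar>"
proof -
  obtain a b where em: "em = (a, b)" by (cases em)
  define c s where "c = cos \<theta>" and "s = sin \<theta>"
  have ab1: "a^2 + b^2 = 1" using unit_Pair[OF assms(1)] by (simp add: em)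
  have cs1: "c^2 + s^2 = 1" by (simp add: c_def s_def)
  have rot: "rot \<theta> em = (c * a - s * b, s * a + c * b)" by (simp add: rot_def em c_def s_def)
  have "(c * a - s * b)^2 + (s * a + c * b)^2 = (c^2 + s^2) * (a^2 + b^2)" by algebra
  then have "norm (rot \<theta> em) = 1" using ab1 cs1 by (simp add: rot norm_Pair)
  then obtain k where k: "k^2 = 1" "\<nu> = (- k * (s * a + c * b), k * (c * a - s * b))"
    using unit_orthogonal_plane[OF _ assms(2,3)] by (auto simp: rot)
  have abs_k: "\<bar>k\<bar> = 1" using k(1) by (auto simp: power2_eq_1_iff)
  have "fst em * snd \<nu> - snd em * fst \<nu> = k * c * (a^2 + b^2)"
    by (simp add: em k(2) algebra_simps power2_eq_square)
  then show "\<bar>fst em * snd \<nu> - snd em * fst \<nu>\<bar> = \<bar>cos \<theta>\<bar>"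
    using ab1 abs_k by (simp add: abs_mult c_def)
  have "(fst em * fst em - snd em * snd em) * (fst \<nu> * snd (rot \<theta> em) + snd \<nu> * fst (rot \<theta> em))
          - (fst em * snd em + snd em * fst em) * (fst \<nu> * fst (rot \<theta> em) - snd \<nu> * snd (rot \<theta> em))
        = k * (c^2 - s^2) * (a^2 + b^2)^2"
    unfolding rot k(2) by (simp add: em) algebra
  then show "\<bar>(fst em * fst em - snd em * snd em) * (fst \<nu> * snd (rot \<theta> em) + snd \<nu> * fst (rot \<theta> em))
          - (fst em * snd em + snd em * fst em) * (fst \<nu> * fst (rot \<theta> em) - snd \<nu> * snd (rot \<theta> em))\<bar>
         = \<bar>cos (2 * \<theta>)\<bar>"
    using ab1 abs_k by (simp add: abs_mult cos_double c_def s_def)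
qed

lemma corner_gradient_eq_0:
  assumes "open S" "smooth_on S u" "h > 0" "seg x0 e h \<subseteq> S"
    and "\<And>p. p \<in> seg x0 e h \<Longrightarrow> u p = 0"
    and "normal_deriv \<nu> u x0 = 0" and "fst e * snd \<nu> - snd e * fst \<nu> \<noteq> 0"
  shows "Dx u x0 = 0" "Dy u x0 = 0"
proof -
  have "normal_deriv e u x0 = 0"
    using smooth_on_normal_deriv_eq_0_on_seg[OF assms(1-5)] seg_memI[of 0 h x0 e] assms(3) by simp
  from real_linear_system_eq_0[OF this[unfolded normal_deriv_def] assms(6)[unfolded normal_deriv_def] assms(7)]
  show "Dx u x0 = 0" "Dy u x0 = 0" .
qed

lemma corner_hessian_eq_0:
  assumes "open S" "smooth_on S u" "h > 0" "seg x0 em h \<subseteq> S" "seg x0 ep h \<subseteq> S"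
    and "\<And>p. p \<in> seg x0 em h \<Longrightarrow> u p = 0"
    and "(\<lambda>t. \<eta> (x0 + t *\<^sub>R ep)) differentiable (at 0)"
    and "\<And>p. p \<in> seg x0 ep h \<Longrightarrow> normal_deriv \<nu> u p + \<eta> p * u p = 0"
    and "Dx u x0 = 0" "Dy u x0 = 0" "laplacian u x0 = 0"
    and "(fst em * fst em - snd em * snd em) * (fst \<nu> * snd ep + snd \<nu> * fst ep)
          - (fst em * snd em + snd em * fst em) * (fst \<nu> * fst ep - snd \<nu> * snd ep) \<noteq> 0"
  shows "Dx (Dx u) x0 = 0" "Dx (Dy u) x0 = 0" "Dy (Dx u) x0 = 0" "Dy (Dy u) x0 = 0"
proof -
  have x0: "x0 \<in> seg x0 em h" using seg_memI[of 0 h x0 em] assms(3) by simp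
  have commute: "Dx (Dy u) x0 = Dy (Dx u) x0"
    using smooth_on_Dx_Dy_commute[OF assms(1,2)] assms(4) x0 by blast
  have trace: "Dx (Dx u) x0 + Dy (Dy u) x0 = 0"
    using assms(11) by (simp add: laplacian_def)
  have "hessian_form em em u x0 = 0"
    using smooth_on_hessian_form_eq_0_on_seg[OF assms(1-4,6)] .
  moreover have "hessian_form \<nu> ep u x0 = 0"
    using smooth_on_hessian_form_eq_0_of_Robin[OF assms(1-3,5,7,8) assms(6)[OF x0] assms(9,10)] .
  ultimately have "Dx (Dx u) x0 = 0 \<and> Dx (Dy u) x0 = 0"
    using real_linear_system_eq_0[OF _ _ assms(12)]
    unfolding hessian_form_traceless[OF commute trace] by blast
  then show "Dx (Dx u) x0 = 0" "Dx (Dy u) x0 = 0" "Dy (Dx u) x0 = 0" "Dy (Dy u) x0 = 0"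
    using commute trace by simp_all
qed

lemma cos_corner_angle_neq_0:
  assumes "0 < \<alpha>" "\<alpha> < 1" "\<alpha> \<noteq> 1/2"
  shows "cos (\<alpha> * pi) \<noteq> 0"
proof
  assume "cos (\<alpha> * pi) = 0"
  then obtain n :: int where "\<alpha> = n + 1/2" by (auto simp: cos_mult_pi_eq_0_iff)
  with assms show False by (cases "n \<ge> 0"; cases "n = 0") auto
qed

lemma cos_double_corner_angle_neq_0:
  assumes "0 < \<alpha>" "\<alpha> < 1" "\<alpha> \<noteq> 1/4" "\<alpha> \<noteq> 3/4"
  shows "cos (2 * (\<alpha> * pi)) \<noteq> 0"
proof
  assume "cos (2 * (\<alpha> * pi)) = 0"
  then obtain n :: int where n: "2 * \<alpha> = n + 1/2"
    using cos_mult_pi_eq_0_iff[of "2 * \<alpha>"] by (auto simp: mult.assoc)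
  then have "n = 0 \<or> n = 1" using assms(1,2) by linarith
  with n assms(3,4) show False by auto
qed

theorem theorem5p11:
  fixes \<Omega> :: "(real \<times> real) set" and u :: "real \<times> real \<Rightarrow> complex"
    and lam :: real and x0 em ep \<nu> :: "real \<times> real" and h \<alpha> :: real
    and \<eta>2 :: "real \<times> real \<Rightarrow> complex"
  assumes "open \<Omega>" and "lam > 0"
    and "smooth_on \<Omega> u"
    and "set_integrable lborel \<Omega> (\<lambda>x. (cmod (u x))\<^sup>2)"
    and "\<And>p. p \<in> \<Omega> \<Longrightarrow> - laplacian u p = of_real lam * u p"
    and "x0 \<in> \<Omega>" and "h > 0" and "0 < \<alpha>" and "\<alpha> < 1"
    and "norm em = 1" and "ep = rot (\<alpha> * pi) em"
    and "seg x0 ep h \<subseteq> \<Omega>" and "seg x0 em h \<subseteq> \<Omega>"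
    and "norm \<nu> = 1" and "\<nu> \<bullet> ep = 0"
    and "(\<lambda>t. \<eta>2 (x0 + t *\<^sub>R ep)) C1_differentiable_on {0..h}"
    and "\<And>p. p \<in> seg x0 ep h \<Longrightarrow> normal_deriv \<nu> u p + \<eta>2 p * u p = 0"
    and "\<And>p. p \<in> seg x0 em h \<Longrightarrow> u p = 0"
    and "\<alpha> \<notin> {1/4, 1/2, 3/4}"
  shows "\<forall>ds. length ds \<le> 2 \<longrightarrow> pd ds u x0 = 0"
proof -
  have h0: "0 \<in> {0..h}" using assms(7) by simp
  have u0: "u x0 = 0" using assms(18) seg_memI[OF h0, of x0 em] by simp
  have "normal_deriv \<nu> u x0 = 0" using assms(17)[OF seg_memI[OF h0, of x0 ep]] u0 by simp
  moreover have "fst em * snd \<nu> - snd em * fst \<nu> \<noteq> 0"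
    using rot_corner_determinants(1)[OF assms(10,14) assms(15)[unfolded assms(11)]]
      cos_corner_angle_neq_0[OF assms(8,9)] assms(19) by auto
  ultimately have grad: "Dx u x0 = 0" "Dy u x0 = 0"
    using corner_gradient_eq_0[OF assms(1,3,7,13,18)] by blast+
  have "(\<lambda>t. \<eta>2 (x0 + t *\<^sub>R ep)) differentiable (at 0)"
    using assms(16) h0 by (simp add: C1_differentiable_on_eq)
  moreover have "laplacian u x0 = 0" using assms(5)[OF assms(6)] u0 by simp
  moreover have "(fst em * fst em - snd em * snd em) * (fst \<nu> * snd ep + snd \<nu> * fst ep)
      - (fst em * snd em + snd em * fst em) * (fst \<nu> * fst ep - snd \<nu> * snd ep) \<noteq> 0"
    using rot_corner_determinants(2)[OF assms(10,14) assms(15)[unfolded assms(11)]]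
      cos_double_corner_angle_neq_0[OF assms(8,9)] assms(11,19) by auto
  ultimately have "Dx (Dx u) x0 = 0" "Dx (Dy u) x0 = 0" "Dy (Dx u) x0 = 0" "Dy (Dy u) x0 = 0"
    using corner_hessian_eq_0[OF assms(1,3,7,13,12,18) _ assms(17) grad] by blast+
  moreover have "ds = [] \<or> (\<exists>b. ds = [b]) \<or> (\<exists>b b'. ds = [b, b'])" if "length ds \<le> 2" for ds :: "bool list"
    using that by (cases ds; cases "tl ds") auto
  ultimately show ?thesis using u0 grad by fastforce
qed

end
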